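(* A set of representatives for the double cosets $\mathcal{B}\backslash\mathcal{K}/\mathcal{B}$ is $$\left\{\begin{pmatrix}1&0\\0&1\end{pmatrix},\ \begin{pmatrix}0&1\\1&0\end{pmatrix},\ \begin{pmatrix}1&0\\ \sqrt\epsilon\,\varpi^k&1\end{pmatrix}\ \middle|\ k\ge1\right\}.$$
   Context: Let $F$ be a non-archimedean local field with odd residual characteristic, ring of integers $\mathcal{O}_F$, uniformizer $\varpi$. Fix a non-square $\epsilon\in\mathcal{O}_F^\times$, $E=F[\sqrt\epsilon]$ with ring of integers $\mathcal{O}_E$; $\overline{x}$ is Galois conjugation. $G=\{g\in\mathrm{GL}_2(E):\overline{g}^{\top}\mathrm{w}g=\mathrm{w}\}$ with $\mathrm{w}=\begin{pmatrix}0&1\\1&0\end{pmatrix}$, $\mathcal{K}=G\cap M_2(\mathcal{O}_E)$, $B$ the subgroup of upper triangular matrices in $G$, and $\mathcal{B}=B\cap\mathcal{K}$. *)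

theory Defs
  imports Main
begin

text \<open>A valuation v on a field; its value at 0 is irrelevant (0 has valuation +infinity).\<close>
definition disc_val :: "('a::field \<Rightarrow> int) \<Rightarrow> bool" where
  "disc_val v \<longleftrightarrow>
     (\<forall>x y. x \<noteq> 0 \<longrightarrow> y \<noteq> 0 \<longrightarrow> v (x * y) = v x + v y) \<and>
     (\<forall>x y. x \<noteq> 0 \<longrightarrow> y \<noteq> 0 \<longrightarrow> x + y \<noteq> 0 \<longrightarrow> min (v x) (v y) \<le> v (x + y)) \<and>
     (\<forall>n. \<exists>x. x \<noteq> 0 \<and> v x = n)"

definition OF :: "('a::field \<Rightarrow> int) \<Rightarrow> 'a set" where
  "OF v = {x. x = 0 \<or> 0 \<le> v x}"

definition maxid :: "('a::field \<Rightarrow> int) \<Rightarrow> 'a set" where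
  "maxid v = {x. x = 0 \<or> 0 < v x}"

definition units_OF :: "('a::field \<Rightarrow> int) \<Rightarrow> 'a set" where
  "units_OF v = {x. x \<noteq> 0 \<and> v x = 0}"

definition finite_residue_field :: "('a::field \<Rightarrow> int) \<Rightarrow> bool" where
  "finite_residue_field v \<longleftrightarrow>
     (\<exists>S. finite S \<and> S \<subseteq> OF v \<and> (\<forall>x\<in>OF v. \<exists>s\<in>S. x - s \<in> maxid v))"

definition vclose :: "('a::field \<Rightarrow> int) \<Rightarrow> int \<Rightarrow> 'a \<Rightarrow> 'a \<Rightarrow> bool" where
  "vclose v n x y \<longleftrightarrow> x = y \<or> n \<le> v (x - y)"

definition vcomplete :: "('a::field \<Rightarrow> int) \<Rightarrow> bool" where
  "vcomplete v \<longleftrightarrow>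
     (\<forall>X :: nat \<Rightarrow> 'a.
        (\<forall>n. \<exists>N. \<forall>i\<ge>N. \<forall>j\<ge>N. vclose v n (X i) (X j)) \<longrightarrow>
        (\<exists>L. \<forall>n. \<exists>N. \<forall>i\<ge>N. vclose v n (X i) L))"

definition nonarch_local_field :: "('a::field \<Rightarrow> int) \<Rightarrow> bool" where
  "nonarch_local_field v \<longleftrightarrow> disc_val v \<and> finite_residue_field v \<and> vcomplete v"

text \<open>Residue field O_F / m has odd characteristic iff 2 is not in the maximal ideal.\<close>
definition odd_residual_char :: "('a::field \<Rightarrow> int) \<Rightarrow> bool" where
  "odd_residual_char v \<longleftrightarrow> (2::'a) \<notin> maxid v"

section \<open>The quadratic extension E = F[sqrt eps]; (a,b) stands for a + b sqrt eps\<close>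

type_synonym 'a ext = "'a \<times> 'a"

definition ezero :: "'a::field ext" where "ezero = (0, 0)"
definition eone :: "'a::field ext" where "eone = (1, 0)"

fun eadd :: "'a::field ext \<Rightarrow> 'a ext \<Rightarrow> 'a ext" where
  "eadd (a, b) (c, d) = (a + c, b + d)"

fun eneg :: "'a::field ext \<Rightarrow> 'a ext" where
  "eneg (a, b) = (- a, - b)"

fun emul :: "'a::field \<Rightarrow> 'a ext \<Rightarrow> 'a ext \<Rightarrow> 'a ext" where
  "emul eps (a, b) (c, d) = (a * c + eps * b * d, a * d + b * c)"

fun econj :: "'a::field ext \<Rightarrow> 'a ext" where
  "econj (a, b) = (a, - b)"

fun enorm :: "'a::field \<Rightarrow> 'a ext \<Rightarrow> 'a" where
  "enorm eps (a, b) = a * a - eps * b * b"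

text \<open>Ring of integers of E: elements of absolute value at most 1, where the
  absolute value of E is the unique extension |z|_E = |N_{E/F} z|^(1/2).\<close>
definition OE :: "('a::field \<Rightarrow> int) \<Rightarrow> 'a \<Rightarrow> 'a ext set" where
  "OE v eps = {z. enorm eps z \<in> OF v}"

section \<open>2x2 matrices over E: M2 a b c d = [[a,b],[c,d]]\<close>

datatype 'e M2 = M2 'e 'e 'e 'e

fun mmul :: "'a::field \<Rightarrow> 'a ext M2 \<Rightarrow> 'a ext M2 \<Rightarrow> 'a ext M2" where
  "mmul eps (M2 a b c d) (M2 a' b' c' d') =
     M2 (eadd (emul eps a a') (emul eps b c')) (eadd (emul eps a b') (emul eps b d'))
        (eadd (emul eps c a') (emul eps d c')) (eadd (emul eps c b') (emul eps d d'))"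

fun mconjT :: "'a::field ext M2 \<Rightarrow> 'a ext M2" where
  "mconjT (M2 a b c d) = M2 (econj a) (econj c) (econj b) (econj d)"

definition mone :: "'a::field ext M2" where "mone = M2 eone ezero ezero eone"
definition wmat :: "'a::field ext M2" where "wmat = M2 ezero eone eone ezero"

fun entries :: "'e M2 \<Rightarrow> 'e set" where
  "entries (M2 a b c d) = {a, b, c, d}"

fun lower_left :: "'e M2 \<Rightarrow> 'e" where
  "lower_left (M2 a b c d) = c"

definition GL2 :: "'a::field \<Rightarrow> 'a ext M2 set" where
  "GL2 eps = {g. \<exists>h. mmul eps g h = mone \<and> mmul eps h g = mone}"

definition Ugrp :: "'a::field \<Rightarrow> 'a ext M2 set" where
  "Ugrp eps = {g \<in> GL2 eps. mmul eps (mconjT g) (mmul eps wmat g) = wmat}"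

definition Kgrp :: "('a::field \<Rightarrow> int) \<Rightarrow> 'a \<Rightarrow> 'a ext M2 set" where
  "Kgrp v eps = {g \<in> Ugrp eps. entries g \<subseteq> OE v eps}"

definition Bgrp :: "('a::field \<Rightarrow> int) \<Rightarrow> 'a \<Rightarrow> 'a ext M2 set" where
  "Bgrp v eps = {g \<in> Kgrp v eps. lower_left g = ezero}"

definition dcoset :: "('a::field \<Rightarrow> int) \<Rightarrow> 'a \<Rightarrow> 'a ext M2 \<Rightarrow> 'a ext M2 set" where
  "dcoset v eps g = {mmul eps b1 (mmul eps g b2) | b1 b2. b1 \<in> Bgrp v eps \<and> b2 \<in> Bgrp v eps}"

text \<open>The proposed representatives; (0, pi^k) is sqrt(eps) * pi^k\<close>
definition reps :: "'a::field \<Rightarrow> 'a ext M2 set" where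
  "reps pi = {mone, wmat} \<union> {M2 eone ezero (0, pi ^ k) eone | k::nat. 1 \<le> k}"

end

(*
  The double coset of g = [[a, b], [c, d]] in K is governed by its lower left entry c.
  Multiplying g by elements of B on either side multiplies c by units of O_E, so the
  valuation of N(c), with a separate value for c = 0, is an invariant; it separates the
  proposed representatives.  Conversely, unitarity of g makes conj(a) c a multiple of
  sqrt(eps).  If c = 0 then g lies in B; if c is a unit, an upper unipotent element of B
  moves g into B w B; otherwise a is a unit and c = pi^k u sqrt(eps) a with k >= 1 and u a
  unit of O_F.  As E/F is unramified, u is a norm (Hensel's lemma, and counting squares in
  the finite residue field), and a diagonal element of B built from a preimage of u moves g
  into the double coset of the k-th representative.
*)
theory Submission
  imports Defs
begin

section \<open>Discrete valuations\<close>

locale discrete_valuation =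
  fixes v :: "'a::field \<Rightarrow> int"
  assumes disc_val: "disc_val v"
begin

text \<open>\<open>vge n x\<close> says \<open>x \<in> \<pi>\<^sup>n O\<^sub>F\<close>; the value \<open>v 0\<close> is junk, so \<open>0\<close> is treated separately.\<close>
definition vge :: "int \<Rightarrow> 'a \<Rightarrow> bool" where
  "vge n x \<longleftrightarrow> x = 0 \<or> n \<le> v x"

lemma val_mult: "x \<noteq> 0 \<Longrightarrow> y \<noteq> 0 \<Longrightarrow> v (x * y) = v x + v y"
  using disc_val unfolding disc_val_def by blast

lemma val_add_ge_min: "x \<noteq> 0 \<Longrightarrow> y \<noteq> 0 \<Longrightarrow> x + y \<noteq> 0 \<Longrightarrow> min (v x) (v y) \<le> v (x + y)"
  using disc_val unfolding disc_val_def by blast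

lemma val_one [simp]: "v 1 = 0"
  using val_mult[of 1 1] by simp

lemma val_minus [simp]: "v (- x) = v x"
proof (cases "x = 0")
  case False
  have "v (-1) = 0"
    using val_mult[of "-1" "-1"] by simp
  with False show ?thesis
    using val_mult[of "-1" x] by simp
qed simp

lemma val_inverse: "x \<noteq> 0 \<Longrightarrow> v (inverse x) = - v x"
  using val_mult[of x "inverse x"] by simp

lemma val_divide: "x \<noteq> 0 \<Longrightarrow> y \<noteq> 0 \<Longrightarrow> v (x / y) = v x - v y"
  by (simp add: divide_inverse val_mult val_inverse)

lemma val_power: "x \<noteq> 0 \<Longrightarrow> v (x ^ n) = int n * v x"
  by (induction n) (auto simp: val_mult algebra_simps)

lemma vge_zero [simp]: "vge n 0"
  by (simp add: vge_def)

lemma vge_0_one [simp]: "vge 0 1"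
  by (simp add: vge_def)

lemma vge_mono: "vge n x \<Longrightarrow> m \<le> n \<Longrightarrow> vge m x"
  unfolding vge_def by auto

lemma vge_minus_iff [simp]: "vge n (- x) \<longleftrightarrow> vge n x"
  unfolding vge_def by simp

lemma vge_add: "vge n x \<Longrightarrow> vge n y \<Longrightarrow> vge n (x + y)"
  unfolding vge_def using val_add_ge_min[of x y]
  by (cases "x = 0"; cases "y = 0"; cases "x + y = 0") auto

lemma vge_diff: "vge n x \<Longrightarrow> vge n y \<Longrightarrow> vge n (x - y)"
  using vge_add[of n x "- y"] by simp

lemma vge_mult: "vge n x \<Longrightarrow> vge m y \<Longrightarrow> vge (n + m) (x * y)"
  unfolding vge_def by (cases "x = 0"; cases "y = 0") (auto simp: val_mult)

lemma vge_mult_0: "vge n x \<Longrightarrow> vge 0 y \<Longrightarrow> vge n (x * y)"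
  using vge_mult[of n x 0 y] by simp

lemma vge_0_mult: "vge 0 x \<Longrightarrow> vge n y \<Longrightarrow> vge n (x * y)"
  using vge_mult[of 0 x n y] by simp

lemma OF_iff_vge: "x \<in> OF v \<longleftrightarrow> vge 0 x"
  by (auto simp: OF_def vge_def)

lemma maxid_iff_vge: "x \<in> maxid v \<longleftrightarrow> vge 1 x"
  by (auto simp: maxid_def vge_def)

lemma units_OF_iff_vge: "x \<in> units_OF v \<longleftrightarrow> vge 0 x \<and> \<not> vge 1 x"
  by (auto simp: units_OF_def vge_def)

lemma one_units_OF [simp]: "1 \<in> units_OF v"
  by (simp add: units_OF_def)

lemma vclose_iff_vge: "vclose v n x y \<longleftrightarrow> vge n (x - y)"
  unfolding vclose_def vge_def by auto

lemma vge_unit_mult_iff: "u \<in> units_OF v \<Longrightarrow> vge n (u * x) \<longleftrightarrow> vge n x"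
  unfolding vge_def units_OF_def by (cases "x = 0") (auto simp: val_mult)

lemma vge_divide_unit: "vge n x \<Longrightarrow> u \<in> units_OF v \<Longrightarrow> vge n (x / u)"
  unfolding vge_def units_OF_def by (cases "x = 0") (auto simp: val_divide)

lemma units_OF_mult_iff:
  "vge 0 x \<Longrightarrow> vge 0 y \<Longrightarrow> x * y \<in> units_OF v \<longleftrightarrow> x \<in> units_OF v \<and> y \<in> units_OF v"
  unfolding units_OF_iff_vge vge_def by (cases "x = 0"; cases "y = 0") (auto simp: val_mult)

lemma unit_add_vge_1: "x \<in> units_OF v \<Longrightarrow> vge 1 y \<Longrightarrow> x + y \<in> units_OF v"
proof -
  assume x: "x \<in> units_OF v" and y: "vge 1 y"
  have "vge 0 (x + y)"
    using x y by (intro vge_add) (auto simp: units_OF_iff_vge elim: vge_mono)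
  moreover have "\<not> vge 1 (x + y)"
    using x vge_diff[OF _ y, of "x + y"] by (auto simp: units_OF_iff_vge)
  ultimately show ?thesis
    by (simp add: units_OF_iff_vge)
qed

lemma vge_1_square: "vge 1 (x * x) \<Longrightarrow> vge 1 x"
  unfolding vge_def by (cases "x = 0") (auto simp: val_mult)

lemma vge_1_mult_cases: "vge 0 x \<Longrightarrow> vge 0 y \<Longrightarrow> vge 1 (x * y) \<Longrightarrow> vge 1 x \<or> vge 1 y"
  unfolding vge_def by (cases "x = 0"; cases "y = 0") (auto simp: val_mult)

lemma vge_all_imp_zero: "(\<And>n. vge n x) \<Longrightarrow> x = 0"
  unfolding vge_def by (metis less_add_one not_le)

lemma min_val_coordinate:
  assumes "\<not> (vge 0 p \<and> vge 0 q)"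
  obtains s where "s \<noteq> 0" "v s < 0" "vge 0 (p / s)" "vge 0 (q / s)" "p / s = 1 \<or> q / s = 1"
proof (cases "p \<noteq> 0 \<and> (q = 0 \<or> v p \<le> v q)")
  case True
  then have "vge 0 (q / p)"
    by (cases "q = 0") (simp_all add: vge_def val_divide)
  moreover from True assms have "v p < 0"
    unfolding vge_def by linarith
  ultimately show ?thesis
    using True by (intro that[of p]) simp_all
next
  case False
  with assms have "q \<noteq> 0" "p = 0 \<or> v q \<le> v p"
    by auto
  then have "vge 0 (p / q)"
    by (cases "p = 0") (simp_all add: vge_def val_divide)
  moreover from False assms have "v q < 0"
    unfolding vge_def by linarith
  ultimately show ?thesis
    using \<open>q \<noteq> 0\<close> by (intro that[of q]) simp_all
qed

lemma two_in_units_OF: "odd_residual_char v \<Longrightarrow> 2 \<in> units_OF v"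
proof -
  assume "odd_residual_char v"
  then have "\<not> vge 1 (2::'a)"
    by (simp add: odd_residual_char_def maxid_iff_vge)
  moreover have "vge 0 (1 + 1 :: 'a)"
    by (intro vge_add) auto
  ultimately show ?thesis
    by (simp add: units_OF_iff_vge)
qed

section \<open>Hensel's lemma for square roots\<close>

lemma newton_step_sqrt:
  assumes two: "2 \<in> units_OF v" and x: "x \<in> units_OF v"
    and err: "vge n (x * x - w)" and n: "1 \<le> n"
  defines "x' \<equiv> x - (x * x - w) / (2 * x)"
  shows "x' \<in> units_OF v" "vge n (x' - x)" "vge (n + 1) (x' * x' - w)"
proof -
  define t where "t = (x * x - w) / (2 * x)"
  have "2 * x \<in> units_OF v"
    using two x by (auto simp: units_OF_def val_mult)
  with err have t: "vge n t"
    unfolding t_def by (rule vge_divide_unit)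
  show "vge n (x' - x)"
    using t by (simp add: x'_def t_def)
  show "x' \<in> units_OF v"
    using unit_add_vge_1[OF x, of "- t"] vge_mono[OF t n] by (simp add: x'_def t_def)
  have "x * x - w = 2 * x * t"
    using x two by (simp add: t_def units_OF_def)
  moreover have "x' * x' - w = (x * x - w) - 2 * x * t + t * t"
    unfolding x'_def t_def[symmetric] by (simp add: algebra_simps)
  ultimately have "x' * x' - w = t * t"
    by simp
  moreover have "vge (n + n) (t * t)"
    using t t by (rule vge_mult)
  ultimately show "vge (n + 1) (x' * x' - w)"
    using n by (auto elim: vge_mono)
qed

lemma vge_telescope:
  assumes step: "\<And>n. vge (int n + 1) (X (Suc n) - X n)" and "i \<le> j"
  shows "vge (int i + 1) (X j - X i)"
  using \<open>i \<le> j\<close>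
proof (induction j)
  case (Suc j)
  show ?case
  proof (cases "i = Suc j")
    case False
    then have "i \<le> j"
      using Suc.prems by simp
    have "X (Suc j) - X i = (X (Suc j) - X j) + (X j - X i)"
      by simp
    moreover have "vge (int i + 1) (X (Suc j) - X j)"
      using step[of j] \<open>i \<le> j\<close> by (auto elim: vge_mono)
    ultimately show ?thesis
      using Suc.IH \<open>i \<le> j\<close> vge_add by metis
  qed simp
qed simp

lemma vcomplete_limit:
  assumes "vcomplete v" and step: "\<And>n. vge (int n + 1) (X (Suc n) - X n)"
  obtains L where "\<And>n. \<exists>N. \<forall>i\<ge>N. vge n (X i - L)"
proof -
  have "\<exists>N. \<forall>i\<ge>N. \<forall>j\<ge>N. vclose v n (X i) (X j)" for n
  proof (intro exI allI impI)
    fix i j assume ij: "nat n \<le> i" "nat n \<le> j"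
    have "X i - X j = (X i - X (nat n)) - (X j - X (nat n))"
      by simp
    then have "vge (int (nat n) + 1) (X i - X j)"
      using vge_telescope[OF step ij(1)] vge_telescope[OF step ij(2)] vge_diff by metis
    then show "vclose v n (X i) (X j)"
      by (auto simp: vclose_iff_vge elim: vge_mono)
  qed
  then show ?thesis
    using assms(1) that unfolding vcomplete_def vclose_iff_vge by blast
qed

lemma hensel_sqrt:
  assumes complete: "vcomplete v" and odd: "odd_residual_char v"
    and w: "w \<in> units_OF v" and x0: "vge 1 (x0 * x0 - w)"
  shows "\<exists>x. x * x = w"
proof -
  have two: "2 \<in> units_OF v"
    using odd by (rule two_in_units_OF)
  have "x0 * x0 \<in> units_OF v"
    using unit_add_vge_1[OF w x0] by simp
  then have x0_unit: "x0 \<in> units_OF v"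
    by (auto simp: units_OF_def val_mult)
  define X where "X = rec_nat x0 (\<lambda>_ x. x - (x * x - w) / (2 * x))"
  have X_Suc: "X (Suc n) = X n - (X n * X n - w) / (2 * X n)" for n
    by (simp add: X_def)
  have inv: "X n \<in> units_OF v \<and> vge (int n + 1) (X n * X n - w)" for n
  proof (induction n)
    case 0
    then show ?case
      using x0_unit x0 by (simp add: X_def)
  next
    case (Suc n)
    then show ?case
      using newton_step_sqrt[OF two, of "X n" "int n + 1" w] by (simp add: X_Suc add.commute)
  qed
  have step: "vge (int n + 1) (X (Suc n) - X n)" for n
    using newton_step_sqrt(2)[OF two, of "X n" "int n + 1" w] inv[of n] by (simp add: X_Suc)
  obtain L where L: "\<And>n. \<exists>N. \<forall>i\<ge>N. vge n (X i - L)"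
    using vcomplete_limit[OF complete step] by blast
  have "vge m (L * L - w)" if "0 \<le> m" for m
  proof -
    obtain N where N: "\<forall>i\<ge>N. vge m (X i - L)"
      using L by blast
    define i where "i = max N (nat m)"
    have close: "vge m (L - X i)"
      using N vge_minus_iff[of m "X i - L"] by (simp add: i_def)
    have "vge 0 (2 * X i)"
      using inv[of i] two by (auto simp: vge_def units_OF_def val_mult)
    then have "vge 0 ((L - X i) + 2 * X i)"
      using vge_mono[OF close \<open>0 \<le> m\<close>] by (intro vge_add)
    then have "vge m ((L - X i) * (L + X i))"
      using close by (intro vge_mult_0) (simp_all add: algebra_simps)
    moreover have "vge m (X i * X i - w)"
      using inv[of i] by (auto simp: i_def elim: vge_mono)
    moreover have "L * L - w = (L - X i) * (L + X i) + (X i * X i - w)"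
      by (simp add: algebra_simps)
    ultimately show ?thesis
      using vge_add by metis
  qed
  then show ?thesis
    using vge_all_imp_zero[of "L * L - w"] vge_mono[of _ "L * L - w"]
    by (metis eq_iff_diff_eq_0 linorder_linear)
qed

end

section \<open>Units are norms from the unramified extension\<close>

lemma card_Suc_le_twice_card_image:
  assumes fin: "finite T" and t0: "t0 \<in> T"
    and single: "\<And>x. x \<in> T \<Longrightarrow> h x = h t0 \<Longrightarrow> x = t0"
    and double: "\<And>x y. x \<in> T \<Longrightarrow> y \<in> T \<Longrightarrow> h x = h y \<Longrightarrow> y = x \<or> y = \<sigma> x"
  shows "card T + 1 \<le> 2 * card (h ` T)"
proof -
  define T' where "T' = T - {t0}"
  have fin': "finite T'"
    using fin by (simp add: T'_def)
  have card_T: "card T = card T' + 1"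
    using card.remove[OF fin t0] by (simp add: T'_def)
  have "h t0 \<notin> h ` T'"
    using single by (auto simp: T'_def)
  moreover have "h ` T = insert (h t0) (h ` T')"
    using t0 by (auto simp: T'_def)
  ultimately have card_hT: "card (h ` T) = card (h ` T') + 1"
    using fin' by simp
  define g where "g = inv_into T' h"
  have "T' \<subseteq> g ` h ` T' \<union> \<sigma> ` g ` h ` T'"
  proof
    fix y assume y: "y \<in> T'"
    have "g (h y) \<in> T'" "h (g (h y)) = h y"
      using y by (auto simp: g_def intro: inv_into_into f_inv_into_f)
    then have "y = g (h y) \<or> y = \<sigma> (g (h y))"
      using double y by (auto simp: T'_def)
    then show "y \<in> g ` h ` T' \<union> \<sigma> ` g ` h ` T'"
      using y by auto
  qed
  then have "card T' \<le> card (g ` h ` T') + card (\<sigma> ` g ` h ` T')"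
    using fin' by (meson card_Un_le card_mono finite_UnI finite_imageI order_trans)
  also have "\<dots> \<le> card (h ` T') + card (h ` T')"
    using card_image_le[of "h ` T'" g] card_image_le[of "g ` h ` T'" \<sigma>] fin' by simp
  finally show ?thesis
    using card_T card_hT by simp
qed

context discrete_valuation
begin

lemma residue_representatives:
  assumes "finite_residue_field v"
  obtains T where "finite T" "\<And>t. t \<in> T \<Longrightarrow> vge 0 t"
    "\<And>x. vge 0 x \<Longrightarrow> \<exists>t\<in>T. vge 1 (x - t)"
    "\<And>s t. s \<in> T \<Longrightarrow> t \<in> T \<Longrightarrow> vge 1 (s - t) \<Longrightarrow> s = t"
proof -
  obtain S where S: "finite S" "S \<subseteq> OF v" "\<forall>x\<in>OF v. \<exists>s\<in>S. x - s \<in> maxid v"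
    using assms unfolding finite_residue_field_def by blast
  define covering where "covering T \<longleftrightarrow> T \<subseteq> S \<and> (\<forall>x. vge 0 x \<longrightarrow> (\<exists>t\<in>T. vge 1 (x - t)))" for T
  have "covering S"
    using S by (auto simp: covering_def OF_iff_vge maxid_iff_vge)
  then obtain T where T: "covering T" and min: "\<And>T'. covering T' \<Longrightarrow> card T \<le> card T'"
    using ex_has_least_nat[of covering S card] by blast
  have fin: "finite T"
    using T S(1) by (auto simp: covering_def intro: finite_subset)
  have cover: "\<exists>t\<in>T. vge 1 (x - t)" if "vge 0 x" for x
    using T that by (auto simp: covering_def)
  have "s = t" if st: "s \<in> T" "t \<in> T" "vge 1 (s - t)" for s t
  proof (rule ccontr)
    assume "s \<noteq> t"
    have "covering (T - {t})"
      unfolding covering_def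
    proof (intro conjI allI impI)
      show "T - {t} \<subseteq> S"
        using T by (auto simp: covering_def)
    next
      fix x assume "vge 0 x"
      then obtain t' where t': "t' \<in> T" "vge 1 (x - t')"
        using cover by blast
      have "x - s = (x - t) - (s - t)"
        by simp
      then have "t' = t \<Longrightarrow> vge 1 (x - s)"
        using t' st(3) vge_diff by metis
      then show "\<exists>t'\<in>T - {t}. vge 1 (x - t')"
        using t' st(1) \<open>s \<noteq> t\<close> by (cases "t' = t") auto
    qed
    then have "card T \<le> card (T - {t})"
      by (rule min)
    moreover have "card (T - {t}) < card T"
      using fin st(2) by (rule card_Diff1_less)
    ultimately show False
      by simp
  qed
  moreover have "vge 0 t" if "t \<in> T" for t
    using T S(2) that by (auto simp: covering_def OF_iff_vge)
  ultimately show ?thesis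
    using that fin cover by blast
qed

text \<open>\<open>rep\<close> is the reduction map \<open>O\<^sub>F \<rightarrow> O\<^sub>F/\<pi>\<close>, with the residue field realised as
  the set \<open>T\<close> of representatives.\<close>
definition residue_map :: "'a set \<Rightarrow> ('a \<Rightarrow> 'a) \<Rightarrow> bool" where
  "residue_map T rep \<longleftrightarrow> finite T \<and> (\<forall>t\<in>T. vge 0 t \<and> rep t = t) \<and> (\<forall>x. vge 0 x \<longrightarrow> rep x \<in> T)
     \<and> (\<forall>x y. vge 0 x \<longrightarrow> vge 0 y \<longrightarrow> rep x = rep y \<longleftrightarrow> vge 1 (x - y))"

lemma exists_residue_map:
  assumes "finite_residue_field v"
  obtains T rep where "residue_map T rep"
proof -
  obtain T where fin: "finite T" and T_int: "\<And>t. t \<in> T \<Longrightarrow> vge 0 t"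
    and cover: "\<And>x. vge 0 x \<Longrightarrow> \<exists>t\<in>T. vge 1 (x - t)"
    and distinct: "\<And>s t. s \<in> T \<Longrightarrow> t \<in> T \<Longrightarrow> vge 1 (s - t) \<Longrightarrow> s = t"
    using residue_representatives[OF assms] by blast
  define rep where "rep x = (SOME t. t \<in> T \<and> vge 1 (x - t))" for x
  have rep: "rep x \<in> T" "vge 1 (x - rep x)" if "vge 0 x" for x
    using someI_ex[OF cover[OF that, unfolded Bex_def]] by (simp_all add: rep_def)
  have eq_iff: "rep x = rep y \<longleftrightarrow> vge 1 (x - y)" if "vge 0 x" "vge 0 y" for x y
  proof
    assume "rep x = rep y"
    then have "(x - rep x) - (y - rep y) = x - y"
      by simp
    then show "vge 1 (x - y)"
      using vge_diff[OF rep(2)[OF that(1)] rep(2)[OF that(2)]] by simp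
  next
    assume "vge 1 (x - y)"
    have "vge 1 ((x - y) + (y - rep y) - (x - rep x))"
      using vge_diff[OF vge_add[OF \<open>vge 1 (x - y)\<close> rep(2)[OF that(2)]] rep(2)[OF that(1)]] .
    then have "vge 1 (rep x - rep y)"
      by (simp add: algebra_simps)
    then show "rep x = rep y"
      using distinct rep that by blast
  qed
  have rep_T: "rep t = t" if "t \<in> T" for t
    using distinct[of "rep t" t] rep[of t] T_int[OF that] that vge_minus_iff[of 1 "t - rep t"]
    by simp
  have "residue_map T rep"
    unfolding residue_map_def
    by (intro conjI ballI allI impI) (simp_all add: fin T_int rep_T rep(1) eq_iff)
  then show ?thesis
    by (rule that)
qed

lemma residue_map_card_image:
  assumes rm: "residue_map T rep"
    and h: "\<And>x y. x \<in> T \<Longrightarrow> y \<in> T \<Longrightarrow> h x = h y \<Longrightarrow> vge 1 (x * x - y * y)"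
  shows "card T + 1 \<le> 2 * card (h ` T)"
proof -
  have fin: "finite T" and T_int: "\<And>t. t \<in> T \<Longrightarrow> vge 0 t" and T_fix: "\<And>t. t \<in> T \<Longrightarrow> rep t = t"
    and rep: "\<And>x. vge 0 x \<Longrightarrow> rep x \<in> T"
    and rep_eq_iff: "\<And>x y. vge 0 x \<Longrightarrow> vge 0 y \<Longrightarrow> rep x = rep y \<longleftrightarrow> vge 1 (x - y)"
    using rm unfolding residue_map_def by blast+
  have distinct: "s = t" if "s \<in> T" "t \<in> T" "vge 1 (s - t)" for s t
    using rep_eq_iff[of s t] T_int T_fix that by simp
  define t0 where "t0 = rep 0"
  have t0: "t0 \<in> T" "vge 1 t0"
    using rep[of 0] rep_eq_iff[of 0 t0] T_int[of t0] T_fix[of t0] by (simp_all add: t0_def)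
  show ?thesis
  proof (rule card_Suc_le_twice_card_image[OF fin t0(1), where \<sigma> = "\<lambda>x. rep (- x)"])
    fix x assume x: "x \<in> T" "h x = h t0"
    have t0_sq: "vge 1 (t0 * t0)"
      using vge_mult_0[OF t0(2) T_int[OF t0(1)]] .
    have "vge 1 ((x * x - t0 * t0) + t0 * t0)"
      by (rule vge_add[OF h[OF x(1) t0(1) x(2)] t0_sq])
    then have "vge 1 (x * x)"
      by simp
    then have "vge 1 x"
      by (rule vge_1_square)
    then have "vge 1 (x - t0)"
      using t0(2) by (rule vge_diff)
    then show "x = t0"
      by (rule distinct[OF x(1) t0(1)])
  next
    fix x y assume xy: "x \<in> T" "y \<in> T" "h x = h y"
    have "vge 1 ((x - y) * (x + y))"
      using h[OF xy] by (simp add: algebra_simps)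
    moreover have "vge 0 (x - y)" "vge 0 (x + y)"
      using T_int xy by (simp_all add: vge_add vge_diff)
    ultimately have "vge 1 (x - y) \<or> vge 1 (x + y)"
      using vge_1_mult_cases by blast
    moreover have "rep (- x) = y" if "vge 1 (x + y)"
    proof -
      have "vge 1 (- x - y)"
        using that vge_minus_iff[of 1 "x + y"] by (simp only: minus_add_distrib diff_conv_add_uminus)
      then show ?thesis
        using rep_eq_iff[of "- x" y] T_int T_fix xy by simp
    qed
    ultimately show "y = x \<or> y = rep (- x)"
      using distinct[OF xy(1,2)] by blast
  qed
qed

text \<open>Over the residue field, \<open>x\<^sup>2\<close> and \<open>u + \<epsilon> y\<^sup>2\<close> each take more than half of the
  values, so they take a common one.\<close>
lemma norm_form_surjective_mod_maxid:
  assumes "finite_residue_field v" and eps: "eps \<in> units_OF v" and u: "vge 0 u"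
  shows "\<exists>x y. vge 0 x \<and> vge 0 y \<and> vge 1 (x * x - eps * y * y - u)"
proof -
  obtain T rep where rm: "residue_map T rep"
    using exists_residue_map[OF assms(1)] .
  then have fin: "finite T" and T_int: "\<And>t. t \<in> T \<Longrightarrow> vge 0 t"
    and rep: "\<And>x. vge 0 x \<Longrightarrow> rep x \<in> T"
    and rep_eq_iff: "\<And>x y. vge 0 x \<Longrightarrow> vge 0 y \<Longrightarrow> rep x = rep y \<longleftrightarrow> vge 1 (x - y)"
    unfolding residue_map_def by blast+
  have eps_int: "vge 0 eps"
    using eps by (simp add: units_OF_iff_vge)
  have int_sq: "vge 0 (x * x)" "vge 0 (u + eps * x * x)" if "x \<in> T" for x
    using vge_mult_0[OF T_int[OF that] T_int[OF that]]
      vge_add[OF u vge_mult_0[OF vge_mult_0[OF eps_int T_int[OF that]] T_int[OF that]]]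
    by simp_all
  define squares where "squares = (\<lambda>x. rep (x * x)) ` T"
  define norms where "norms = (\<lambda>y. rep (u + eps * y * y)) ` T"
  have "card T + 1 \<le> 2 * card squares"
    unfolding squares_def
    by (rule residue_map_card_image[OF rm]) (use rep_eq_iff[OF int_sq(1) int_sq(1)] in blast)
  moreover have "card T + 1 \<le> 2 * card norms"
    unfolding norms_def
  proof (rule residue_map_card_image[OF rm])
    fix x y assume "x \<in> T" "y \<in> T" "rep (u + eps * x * x) = rep (u + eps * y * y)"
    then have "vge 1 ((u + eps * x * x) - (u + eps * y * y))"
      using rep_eq_iff[OF int_sq(2) int_sq(2)] by blast
    then have "vge 1 (eps * (x * x - y * y))"
      by (simp add: algebra_simps)
    then show "vge 1 (x * x - y * y)"
      using eps by (simp add: vge_unit_mult_iff)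
  qed
  moreover have "squares \<union> norms \<subseteq> T"
    unfolding squares_def norms_def using rep int_sq by blast
  then have "card (squares \<union> norms) \<le> card T"
    using fin by (rule card_mono[rotated])
  moreover have "card squares + card norms = card (squares \<union> norms) + card (squares \<inter> norms)"
    using fin by (intro card_Un_Int) (simp_all add: squares_def norms_def)
  ultimately have "card (squares \<inter> norms) \<noteq> 0"
    by linarith
  then obtain z where "z \<in> squares" "z \<in> norms"
    by (metis IntE card.empty equals0I)
  then obtain x y where xy: "x \<in> T" "y \<in> T" "rep (x * x) = rep (u + eps * y * y)"
    unfolding squares_def norms_def by blast
  then have "vge 1 (x * x - (u + eps * y * y))"
    using rep_eq_iff[OF int_sq(1) int_sq(2)] by blast
  then show ?thesis
    using xy T_int by (intro exI[of _ x] exI[of _ y]) (simp add: algebra_simps)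
qed

lemma units_are_norms:
  assumes "vcomplete v" "odd_residual_char v" "finite_residue_field v"
    and eps: "eps \<in> units_OF v" and u: "u \<in> units_OF v"
  shows "\<exists>x y. x * x - eps * y * y = u"
proof -
  obtain x y where xy: "vge 1 (x * x - eps * y * y - u)"
    using norm_form_surjective_mod_maxid[OF assms(3) eps, of u] u
    by (auto simp: units_OF_iff_vge)
  define n where "n = x * x - eps * y * y"
  have n: "n \<in> units_OF v"
    using unit_add_vge_1[OF u xy] by (simp add: n_def)
  then have "u / n \<in> units_OF v"
    using u by (auto simp: units_OF_def val_divide)
  moreover have "vge 1 (1 * 1 - u / n)"
    using vge_divide_unit[OF xy n] n by (simp add: n_def units_OF_def diff_divide_distrib)
  ultimately obtain s where s: "s * s = u / n"
    using hensel_sqrt[OF assms(1,2)] by blast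
  have "(x * s) * (x * s) - eps * (y * s) * (y * s) = (s * s) * n"
    by (simp add: n_def algebra_simps)
  also have "\<dots> = u"
    using s n by (simp add: units_OF_def)
  finally show ?thesis
    by blast
qed

end

section \<open>Arithmetic in \<open>E\<close> and unitary matrices\<close>

lemma emul_assoc: "emul e (emul e x y) z = emul e x (emul e y z)"
  by (cases x; cases y; cases z) (simp add: algebra_simps)

lemma emul_commute: "emul e x y = emul e y x"
  by (cases x; cases y) (simp add: algebra_simps)

lemma emul_left_commute: "emul e x (emul e y z) = emul e y (emul e x z)"
  by (metis emul_assoc emul_commute)

lemma emul_eadd_distrib_left: "emul e x (eadd y z) = eadd (emul e x y) (emul e x z)"
  by (cases x; cases y; cases z) (simp add: algebra_simps)

lemma emul_eadd_distrib_right: "emul e (eadd y z) x = eadd (emul e y x) (emul e z x)"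
  by (cases x; cases y; cases z) (simp add: algebra_simps)

lemma eadd_assoc: "eadd (eadd x y) z = eadd x (eadd y z)"
  by (cases x; cases y; cases z) simp

lemma eadd_commute: "eadd x y = eadd y x"
  by (cases x; cases y) simp

lemma eadd_left_commute: "eadd x (eadd y z) = eadd y (eadd x z)"
  by (metis eadd_assoc eadd_commute)

lemmas ext_ring_simps = emul_assoc emul_commute emul_left_commute
  emul_eadd_distrib_left emul_eadd_distrib_right eadd_assoc eadd_commute eadd_left_commute

lemma emul_ezero_left [simp]: "emul e ezero x = ezero"
  by (cases x) (simp add: ezero_def)

lemma emul_ezero_right [simp]: "emul e x ezero = ezero"
  by (cases x) (simp add: ezero_def)

lemma emul_eone_left [simp]: "emul e eone x = x"
  by (cases x) (simp add: eone_def)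

lemma emul_eone_right [simp]: "emul e x eone = x"
  by (cases x) (simp add: eone_def)

lemma eadd_ezero_left [simp]: "eadd ezero x = x"
  by (cases x) (simp add: ezero_def)

lemma eadd_ezero_right [simp]: "eadd x ezero = x"
  by (cases x) (simp add: ezero_def)

lemma econj_ezero [simp]: "econj ezero = ezero"
  by (simp add: ezero_def)

lemma econj_eone [simp]: "econj eone = eone"
  by (simp add: eone_def)

lemma econj_econj [simp]: "econj (econj x) = x"
  by (cases x) simp

lemma econj_eadd: "econj (eadd x y) = eadd (econj x) (econj y)"
  by (cases x; cases y) simp

lemma econj_emul: "econj (emul e x y) = emul e (econj x) (econj y)"
  by (cases x; cases y) simp

lemma enorm_emul: "enorm e (emul e x y) = enorm e x * enorm e y"
  by (cases x; cases y) (simp add: algebra_simps)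

lemma enorm_econj [simp]: "enorm e (econj x) = enorm e x"
  by (cases x) simp

lemma enorm_eone [simp]: "enorm e eone = 1"
  by (simp add: eone_def)

lemma enorm_eq_0_iff:
  assumes "\<nexists>x. x * x = e"
  shows "enorm e z = 0 \<longleftrightarrow> z = ezero"
proof (cases z)
  case (Pair p q)
  show ?thesis
  proof
    assume norm: "enorm e z = 0"
    show "z = ezero"
    proof (cases "q = 0")
      case False
      then have "(p / q) * (p / q) = e"
        using norm Pair by (simp add: field_simps)
      with assms show ?thesis
        by blast
    qed (use norm Pair in \<open>simp add: ezero_def\<close>)
  qed (simp add: ezero_def)
qed

lemma enorm_ezero [simp]: "enorm e ezero = 0"
  by (simp add: ezero_def)

lemma emul_econj_self: "emul e z (econj z) = (enorm e z, 0)"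
  by (cases z) (simp add: algebra_simps)

lemma emul_eq_ezero_iff:
  assumes "\<nexists>x. x * x = e"
  shows "emul e z w = ezero \<longleftrightarrow> z = ezero \<or> w = ezero"
  using enorm_emul[of e z w] enorm_eq_0_iff[OF assms] by fastforce

lemma fst_eq_0_if_eadd_econj_eq_ezero:
  fixes z :: "'a::field ext"
  shows "(2::'a) \<noteq> 0 \<Longrightarrow> eadd z (econj z) = ezero \<Longrightarrow> fst z = 0"
  by (cases z) (simp add: ezero_def flip: mult_2)

lemma mmul_assoc: "mmul e (mmul e A B) C = mmul e A (mmul e B C)"
  by (cases A; cases B; cases C) (simp add: ext_ring_simps)

lemma mmul_mone_left [simp]: "mmul e mone A = A"
  by (cases A) (simp add: mone_def)

lemma mmul_mone_right [simp]: "mmul e A mone = A"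
  by (cases A) (simp add: mone_def)

lemma mconjT_mmul: "mconjT (mmul e A B) = mmul e (mconjT B) (mconjT A)"
  by (cases A; cases B) (simp add: econj_eadd econj_emul ext_ring_simps)

definition unitary :: "'a::field \<Rightarrow> 'a ext M2 \<Rightarrow> bool" where
  "unitary e g \<longleftrightarrow> mmul e (mconjT g) (mmul e wmat g) = wmat"

lemma unitary_M2: "unitary e (M2 a b c d) \<longleftrightarrow>
   eadd (emul e (econj a) c) (emul e (econj c) a) = ezero \<and>
   eadd (emul e (econj a) d) (emul e (econj c) b) = eone \<and>
   eadd (emul e (econj b) c) (emul e (econj d) a) = eone \<and>
   eadd (emul e (econj b) d) (emul e (econj d) b) = ezero"
  by (simp add: unitary_def wmat_def)

lemma unitary_mmul: "unitary e g \<Longrightarrow> unitary e h \<Longrightarrow> unitary e (mmul e g h)"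
  unfolding unitary_def by (metis mconjT_mmul mmul_assoc)

lemma GL2_mmul: "g \<in> GL2 e \<Longrightarrow> h \<in> GL2 e \<Longrightarrow> mmul e g h \<in> GL2 e"
  unfolding GL2_def by clarify (metis mmul_assoc mmul_mone_left)

text \<open>\<open>uinv g = w (conj g)\<^sup>T w\<close>, the inverse of \<open>g\<close> when \<open>g\<close> is unitary.\<close>
fun uinv :: "'a::field ext M2 \<Rightarrow> 'a ext M2" where
  "uinv (M2 a b c d) = M2 (econj d) (econj b) (econj c) (econj a)"

lemma uinv_mone [simp]: "uinv mone = mone"
  by (simp add: mone_def)

lemma lower_left_uinv [simp]: "lower_left (uinv g) = econj (lower_left g)"
  by (cases g) simp

lemma uinv_mmul_self: "unitary e g \<Longrightarrow> mmul e (uinv g) g = mone"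
  by (cases g) (simp add: unitary_M2 mone_def eadd_commute)

lemma mmul_uinv_self: "g \<in> GL2 e \<Longrightarrow> unitary e g \<Longrightarrow> mmul e g (uinv g) = mone"
proof -
  assume "g \<in> GL2 e" "unitary e g"
  then obtain h where h: "mmul e g h = mone" "mmul e h g = mone"
    by (auto simp: GL2_def)
  have "uinv g = mmul e (mmul e (uinv g) g) h"
    using h by (simp add: mmul_assoc)
  also have "\<dots> = h"
    using \<open>unitary e g\<close> by (simp add: uinv_mmul_self)
  finally show ?thesis
    using h(1) by simp
qed

lemma uinv_GL2:
  assumes "g \<in> GL2 e" "unitary e g"
  shows "uinv g \<in> GL2 e"
  using uinv_mmul_self[OF assms(2)] mmul_uinv_self[OF assms] unfolding GL2_def by blast

lemma unitary_uinv: "g \<in> GL2 e \<Longrightarrow> unitary e g \<Longrightarrow> unitary e (uinv g)"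
proof -
  assume g: "g \<in> GL2 e" "unitary e g"
  have "mmul e (mconjT (uinv g)) (mmul e wmat (uinv g))
      = mmul e (mconjT (uinv g)) (mmul e (mmul e (mconjT g) (mmul e wmat g)) (uinv g))"
    using g(2) by (simp add: unitary_def)
  also have "\<dots> = mmul e (mconjT (mmul e g (uinv g))) (mmul e wmat (mmul e g (uinv g)))"
    by (simp add: mconjT_mmul mmul_assoc)
  also have "\<dots> = wmat"
    using mmul_uinv_self[OF g] by (simp add: mone_def wmat_def)
  finally show ?thesis
    by (simp add: unitary_def)
qed

text \<open>\<open>(0, s)\<close> stands for \<open>s \<surd>\<epsilon>\<close>.\<close>
definition upper_unipotent :: "'a::field \<Rightarrow> 'a ext M2" where
  "upper_unipotent s = M2 eone (0, s) ezero eone"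

definition lower_unipotent :: "'a::field \<Rightarrow> 'a ext M2" where
  "lower_unipotent t = M2 eone ezero (0, t) eone"

text \<open>The lower right entry \<open>\<alpha> / N(\<alpha>)\<close> is \<open>(conj \<alpha>)\<inverse>\<close>.\<close>
definition diag_unit :: "'a::field \<Rightarrow> 'a ext \<Rightarrow> 'a ext M2" where
  "diag_unit e \<alpha> = M2 \<alpha> ezero ezero (emul e (inverse (enorm e \<alpha>), 0) \<alpha>)"

lemma unitary_upper_unipotent: "unitary e (upper_unipotent s)"
  by (simp add: upper_unipotent_def unitary_M2 eone_def ezero_def)

lemma unitary_lower_unipotent: "unitary e (lower_unipotent t)"
  by (simp add: lower_unipotent_def unitary_M2 eone_def ezero_def)

lemma diag_unit_entries_inverse:
  assumes "enorm e \<alpha> \<noteq> 0"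
  defines "\<delta> \<equiv> emul e (inverse (enorm e \<alpha>), 0) \<alpha>"
  shows "emul e (econj \<alpha>) \<delta> = eone" "emul e \<delta> (econj \<alpha>) = eone" "emul e \<alpha> (econj \<delta>) = eone"
proof -
  have "emul e (econj \<alpha>) \<delta> = emul e (inverse (enorm e \<alpha>), 0) (emul e \<alpha> (econj \<alpha>))"
    unfolding \<delta>_def by (simp only: emul_assoc emul_left_commute emul_commute)
  also have "\<dots> = eone"
    using assms(1) by (simp add: emul_econj_self eone_def)
  finally show "emul e (econj \<alpha>) \<delta> = eone" .
  then show "emul e \<delta> (econj \<alpha>) = eone"
    by (simp add: emul_commute)
  from arg_cong[OF \<open>emul e (econj \<alpha>) \<delta> = eone\<close>, of econj]
  show "emul e \<alpha> (econj \<delta>) = eone"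
    by (simp add: econj_emul)
qed

lemma unitary_diag_unit: "enorm e \<alpha> \<noteq> 0 \<Longrightarrow> unitary e (diag_unit e \<alpha>)"
  using diag_unit_entries_inverse[of e \<alpha>]
  by (simp add: diag_unit_def unitary_M2 emul_commute[of e "econj _"])

lemma uinv_lower_unipotent: "uinv (lower_unipotent t) = lower_unipotent (- t)"
  by (simp add: lower_unipotent_def)

lemma lower_left_mmul_upper_triangular:
  "lower_left (mmul e (M2 a b ezero d) (mmul e r (M2 a' b' ezero d')))
     = emul e d (emul e (lower_left r) a')"
  by (cases r) simp

section \<open>The groups K and B\<close>

locale unramified_quadratic =
  fixes v :: "'a::field \<Rightarrow> int" and eps :: 'a
  assumes local_field: "nonarch_local_field v" and odd_char: "odd_residual_char v"
    and eps_unit: "eps \<in> units_OF v" and eps_nonsquare: "\<nexists>x. x * x = eps"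
begin

sublocale discrete_valuation v
  using local_field by unfold_locales (simp add: nonarch_local_field_def)

lemma local_field_complete: "vcomplete v"
  using local_field by (simp add: nonarch_local_field_def)

lemma vge_0_eps: "vge 0 eps"
  using eps_unit by (simp add: units_OF_iff_vge)

lemma vge_0_norm: "vge 0 p \<Longrightarrow> vge 0 q \<Longrightarrow> vge 0 (p * p - eps * q * q)"
  by (intro vge_diff vge_mult_0 vge_0_eps) simp_all

text \<open>The norm form is anisotropic modulo \<open>\<pi>\<close>; this is where \<open>E/F\<close> being unramified enters.\<close>
lemma norm_vge_1_imp_vge_1:
  assumes p: "vge 0 p" and q: "vge 0 q" and norm: "vge 1 (p * p - eps * q * q)"
  shows "vge 1 p \<and> vge 1 q"
proof (cases "vge 1 q")
  case True
  have "vge 1 (eps * q * q)"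
    using vge_mult_0[OF vge_0_mult[OF vge_0_eps True] q] .
  with norm have "vge 1 ((p * p - eps * q * q) + eps * q * q)"
    by (rule vge_add)
  then have "vge 1 (p * p)"
    by simp
  with True show ?thesis
    using vge_1_square by blast
next
  case False
  then have q_unit: "q \<in> units_OF v"
    using q by (simp add: units_OF_iff_vge)
  have "vge 1 ((p * p - eps * q * q) / (q * q))"
    using q_unit by (intro vge_divide_unit norm) (auto simp: units_OF_def val_mult)
  moreover have "(p * p - eps * q * q) / (q * q) = (p / q) * (p / q) - eps"
    using q_unit by (simp add: units_OF_def field_simps)
  ultimately have "\<exists>x. x * x = eps"
    using hensel_sqrt[OF local_field_complete odd_char eps_unit, of "p / q"] by simp
  with eps_nonsquare show ?thesis
    by blast
qed

lemma norm_unit_if_not_vge_1: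
  assumes "vge 0 p" "vge 0 q" "\<not> (vge 1 p \<and> vge 1 q)"
  shows "p * p - eps * q * q \<in> units_OF v"
  unfolding units_OF_iff_vge using assms norm_vge_1_imp_vge_1 vge_0_norm by blast

lemma OE_pair_iff: "(p, q) \<in> OE v eps \<longleftrightarrow> vge 0 p \<and> vge 0 q"
proof
  assume "(p, q) \<in> OE v eps"
  then have norm: "vge 0 (p * p - eps * q * q)"
    by (simp add: OE_def OF_iff_vge)
  show "vge 0 p \<and> vge 0 q"
  proof (rule ccontr)
    assume "\<not> (vge 0 p \<and> vge 0 q)"
    then obtain s where s: "s \<noteq> 0" "v s < 0" "vge 0 (p / s)" "vge 0 (q / s)" "p / s = 1 \<or> q / s = 1"
      by (rule min_val_coordinate)
    have "\<not> (vge 1 (p / s) \<and> vge 1 (q / s))"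
      using s(5) by (auto simp: vge_def)
    then have "p / s * (p / s) - eps * (q / s) * (q / s) \<in> units_OF v"
      using s(3,4) by (intro norm_unit_if_not_vge_1)
    moreover have "p * p - eps * q * q = (s * s) * (p / s * (p / s) - eps * (q / s) * (q / s))"
      using s(1) by (simp add: field_simps)
    ultimately have "p * p - eps * q * q \<noteq> 0" "v (p * p - eps * q * q) = 2 * v s"
      using s(1) by (simp_all add: units_OF_def val_mult)
    with norm s(2) show False
      by (simp add: vge_def)
  qed
next
  assume "vge 0 p \<and> vge 0 q"
  then show "(p, q) \<in> OE v eps"
    by (simp add: OE_def OF_iff_vge vge_0_norm)
qed

lemma OE_iff_vge_enorm: "z \<in> OE v eps \<longleftrightarrow> vge 0 (enorm eps z)"
  by (simp add: OE_def OF_iff_vge)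

lemma unit_is_norm: "u \<in> units_OF v \<Longrightarrow> \<exists>x y. x * x - eps * y * y = u"
  using units_are_norms[OF local_field_complete odd_char _ eps_unit] local_field
  by (simp add: nonarch_local_field_def)

lemma OE_eadd: "x \<in> OE v eps \<Longrightarrow> y \<in> OE v eps \<Longrightarrow> eadd x y \<in> OE v eps"
  by (cases x; cases y) (auto simp: OE_pair_iff intro: vge_add)

lemma OE_emul: "x \<in> OE v eps \<Longrightarrow> y \<in> OE v eps \<Longrightarrow> emul eps x y \<in> OE v eps"
  by (cases x; cases y) (auto simp: OE_pair_iff intro!: vge_add vge_mult_0 vge_0_eps)

lemma OE_econj: "x \<in> OE v eps \<Longrightarrow> econj x \<in> OE v eps"
  by (cases x) (simp add: OE_pair_iff)

lemma OE_ezero [simp]: "ezero \<in> OE v eps"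
  by (simp add: ezero_def OE_pair_iff)

lemma OE_eone [simp]: "eone \<in> OE v eps"
  by (simp add: eone_def OE_pair_iff)

lemma enorm_eps_eq_0_iff: "enorm eps z = 0 \<longleftrightarrow> z = ezero"
  using eps_nonsquare by (rule enorm_eq_0_iff)

lemma Kgrp_iff: "g \<in> Kgrp v eps \<longleftrightarrow> g \<in> GL2 eps \<and> unitary eps g \<and> entries g \<subseteq> OE v eps"
  by (auto simp: Kgrp_def Ugrp_def unitary_def)

lemma Kgrp_intro:
  "unitary eps g \<Longrightarrow> mmul eps g (uinv g) = mone \<Longrightarrow> entries g \<subseteq> OE v eps \<Longrightarrow> g \<in> Kgrp v eps"
  unfolding Kgrp_iff GL2_def using uinv_mmul_self by blast

lemma Bgrp_iff: "g \<in> Bgrp v eps \<longleftrightarrow> g \<in> Kgrp v eps \<and> lower_left g = ezero"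
  by (simp add: Bgrp_def)

lemma entries_mmul:
  "entries g \<subseteq> OE v eps \<Longrightarrow> entries h \<subseteq> OE v eps \<Longrightarrow> entries (mmul eps g h) \<subseteq> OE v eps"
  by (cases g; cases h) (auto intro!: OE_eadd OE_emul)

lemma entries_uinv: "entries g \<subseteq> OE v eps \<Longrightarrow> entries (uinv g) \<subseteq> OE v eps"
  by (cases g) (auto intro!: OE_econj)

lemma Kgrp_mmul: "g \<in> Kgrp v eps \<Longrightarrow> h \<in> Kgrp v eps \<Longrightarrow> mmul eps g h \<in> Kgrp v eps"
  by (simp add: Kgrp_iff GL2_mmul unitary_mmul entries_mmul)

lemma Kgrp_uinv: "g \<in> Kgrp v eps \<Longrightarrow> uinv g \<in> Kgrp v eps"
  by (simp add: Kgrp_iff uinv_GL2 unitary_uinv entries_uinv)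

lemma Bgrp_uinv: "g \<in> Bgrp v eps \<Longrightarrow> uinv g \<in> Bgrp v eps"
  by (simp add: Bgrp_iff Kgrp_uinv)

lemma mone_Kgrp: "mone \<in> Kgrp v eps"
  by (rule Kgrp_intro) (simp_all add: mone_def unitary_M2)

lemma mone_Bgrp: "mone \<in> Bgrp v eps"
  using mone_Kgrp by (simp add: Bgrp_iff mone_def)

lemma wmat_Kgrp: "wmat \<in> Kgrp v eps"
  by (rule Kgrp_intro) (simp_all add: wmat_def mone_def unitary_M2)

lemma mem_dcoset_if_lower_left:
  assumes r: "r \<in> Kgrp v eps" and b: "b \<in> Bgrp v eps" and g: "g \<in> Kgrp v eps"
    and "lower_left (mmul eps (uinv r) (mmul eps b g)) = ezero"
  shows "g \<in> dcoset v eps r"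
proof -
  define b' where "b' = mmul eps (uinv r) (mmul eps b g)"
  have bK: "b \<in> Kgrp v eps"
    using b by (simp add: Bgrp_iff)
  have "b' \<in> Bgrp v eps"
    using assms(4) r bK g by (simp add: b'_def Bgrp_iff Kgrp_mmul Kgrp_uinv)
  moreover have "mmul eps (uinv b) (mmul eps r b') = g"
    using r bK by (simp add: b'_def Kgrp_iff mmul_uinv_self uinv_mmul_self flip: mmul_assoc)
  ultimately show ?thesis
    unfolding dcoset_def using Bgrp_uinv[OF b] by blast
qed

lemma upper_unipotent_Bgrp: "vge 0 s \<Longrightarrow> upper_unipotent s \<in> Bgrp v eps"
  unfolding Bgrp_iff
  by (intro conjI Kgrp_intro unitary_upper_unipotent)
    (simp_all add: upper_unipotent_def mone_def eone_def ezero_def OE_pair_iff)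

lemma lower_unipotent_Kgrp: "vge 0 t \<Longrightarrow> lower_unipotent t \<in> Kgrp v eps"
  by (rule Kgrp_intro[OF unitary_lower_unipotent])
    (simp_all add: lower_unipotent_def mone_def eone_def ezero_def OE_pair_iff)

lemma diag_unit_Bgrp:
  assumes "\<alpha> \<in> OE v eps" and unit: "enorm eps \<alpha> \<in> units_OF v"
  shows "diag_unit eps \<alpha> \<in> Bgrp v eps"
proof -
  have "inverse (enorm eps \<alpha>) \<in> units_OF v"
    using unit by (simp add: units_OF_def val_inverse)
  then have "(inverse (enorm eps \<alpha>), 0) \<in> OE v eps"
    by (simp add: OE_pair_iff units_OF_iff_vge)
  then have "entries (diag_unit eps \<alpha>) \<subseteq> OE v eps"
    using assms(1) by (simp add: diag_unit_def OE_emul)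
  moreover have "mmul eps (diag_unit eps \<alpha>) (uinv (diag_unit eps \<alpha>)) = mone"
    using unit diag_unit_entries_inverse[of eps \<alpha>]
    by (simp add: diag_unit_def mone_def units_OF_def)
  ultimately show ?thesis
    using unit by (simp add: Bgrp_iff Kgrp_intro unitary_diag_unit units_OF_def)
      (simp add: diag_unit_def)
qed

lemma Bgrp_diagonal_units:
  assumes "b \<in> Bgrp v eps"
  obtains a c d where "b = M2 a c ezero d" "enorm eps a \<in> units_OF v" "enorm eps d \<in> units_OF v"
proof -
  obtain a c z d where b: "b = M2 a c z d"
    by (cases b)
  have z: "z = ezero"
    using assms b by (simp add: Bgrp_iff)
  have "unitary eps b" "entries b \<subseteq> OE v eps"
    using assms by (simp_all add: Bgrp_iff Kgrp_iff)
  then have "emul eps (econj a) d = eone" "a \<in> OE v eps" "d \<in> OE v eps"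
    using b z by (simp_all add: unitary_M2)
  then have "enorm eps a * enorm eps d \<in> units_OF v" "vge 0 (enorm eps a)" "vge 0 (enorm eps d)"
    using enorm_emul[of eps "econj a" d] by (simp_all add: OE_iff_vge_enorm)
  then show ?thesis
    using that b z units_OF_mult_iff by blast
qed

section \<open>Double cosets\<close>

text \<open>The double coset invariant; \<open>-1\<close> stands for the order \<open>\<infinity>\<close> of \<open>0\<close>, as the norm of a
  nonzero integral entry has order \<open>\<ge> 0\<close>.\<close>
definition lower_left_order :: "'a ext M2 \<Rightarrow> int" where
  "lower_left_order g = (if lower_left g = ezero then -1 else v (enorm eps (lower_left g)))"

lemma lower_left_order_dcoset:
  assumes "g \<in> dcoset v eps r"
  shows "lower_left_order g = lower_left_order r"
proof -
  obtain b1 b2 where b: "b1 \<in> Bgrp v eps" "b2 \<in> Bgrp v eps" "g = mmul eps b1 (mmul eps r b2)"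
    using assms unfolding dcoset_def by blast
  obtain a c d where b1: "b1 = M2 a c ezero d" "enorm eps d \<in> units_OF v"
    using Bgrp_diagonal_units[OF b(1)] by metis
  obtain a' c' d' where b2: "b2 = M2 a' c' ezero d'" "enorm eps a' \<in> units_OF v"
    using Bgrp_diagonal_units[OF b(2)] by metis
  have norm: "enorm eps (lower_left g) = enorm eps d * (enorm eps (lower_left r) * enorm eps a')"
    using b(3) b1(1) b2(1) by (simp add: lower_left_mmul_upper_triangular enorm_emul)
  show ?thesis
  proof (cases "lower_left r = ezero")
    case True
    then show ?thesis
      using b(3) b1(1) b2(1) by (simp add: lower_left_order_def lower_left_mmul_upper_triangular)
  next
    case False
    then have "enorm eps (lower_left r) \<noteq> 0"
      by (simp add: enorm_eps_eq_0_iff)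
    then have "enorm eps (lower_left g) \<noteq> 0"
      "v (enorm eps (lower_left g)) = v (enorm eps (lower_left r))"
      using norm b1(2) b2(2) by (simp_all add: units_OF_def val_mult)
    with False show ?thesis
      by (auto simp: lower_left_order_def)
  qed
qed

lemma lower_left_order_mone: "lower_left_order mone = -1"
  by (simp add: lower_left_order_def mone_def)

lemma lower_left_order_wmat: "lower_left_order wmat = 0"
  by (simp add: lower_left_order_def wmat_def eone_def ezero_def)

lemma lower_left_order_lower_unipotent:
  "t \<noteq> 0 \<Longrightarrow> lower_left_order (lower_unipotent t) = 2 * v t"
  using eps_unit
  by (simp add: lower_left_order_def lower_unipotent_def ezero_def units_OF_def val_mult
      flip: minus_mult_left)

lemma Kgrp_trace_zero:
  assumes "M2 a b c d \<in> Kgrp v eps"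
  obtains t where "emul eps (econj a) c = (0, t)"
proof -
  have "eadd (emul eps (econj a) c) (emul eps (econj c) a) = ezero"
    using assms by (simp add: Kgrp_iff unitary_M2)
  moreover have "emul eps (econj c) a = econj (emul eps (econj a) c)"
    by (simp add: econj_emul emul_commute)
  ultimately have "fst (emul eps (econj a) c) = 0"
    using two_in_units_OF[OF odd_char] by (intro fst_eq_0_if_eadd_econj_eq_ezero) (simp_all add: units_OF_def)
  then show ?thesis
    using that by (metis prod.collapse)
qed

lemma Kgrp_upper_left_unit:
  assumes g: "M2 a b c d \<in> Kgrp v eps" and c: "vge 1 (enorm eps c)"
  shows "enorm eps a \<in> units_OF v"
proof -
  obtain a1 a2 b1 b2 c1 c2 d1 d2 where
    entries: "a = (a1, a2)" "b = (b1, b2)" "c = (c1, c2)" "d = (d1, d2)"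
    by (metis prod.collapse)
  have int: "vge 0 a1" "vge 0 a2" "vge 0 b1" "vge 0 b2" "vge 0 c1" "vge 0 c2" "vge 0 d1" "vge 0 d2"
    using g entries by (simp_all add: Kgrp_iff OE_pair_iff)
  have c_max: "vge 1 c1" "vge 1 c2"
    using norm_vge_1_imp_vge_1[OF int(5,6)] c entries by simp_all
  have y: "vge 1 (c1 * b1 - eps * c2 * b2)" "vge 1 (c1 * b2 - c2 * b1)"
    using vge_diff[OF vge_mult_0[OF c_max(1) int(3)] vge_mult_0[OF vge_0_mult[OF vge_0_eps c_max(2)] int(4)]]
      vge_diff[OF vge_mult_0[OF c_max(1) int(4)] vge_mult_0[OF c_max(2) int(3)]]
    by (simp_all add: mult.assoc)
  obtain x1 x2 where x: "emul eps (econj a) d = (x1, x2)"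
    by (metis prod.collapse)
  have "eadd (x1, x2) (emul eps (econj c) b) = eone"
    using g x by (simp add: Kgrp_iff unitary_M2)
  then have x1: "x1 = 1 - (c1 * b1 - eps * c2 * b2)" and x2: "x2 = - (c1 * b2 - c2 * b1)"
    by (simp_all add: entries eone_def algebra_simps)
  have "\<not> vge 1 x1"
  proof
    assume "vge 1 x1"
    then have "vge 1 (x1 + (c1 * b1 - eps * c2 * b2))"
      using y(1) by (rule vge_add)
    then show False
      using x1 by (simp add: vge_def)
  qed
  moreover have "vge 0 x1"
    using vge_diff[OF vge_0_one vge_mono[OF y(1), of 0]] by (simp add: x1)
  moreover have "vge 0 x2"
    using vge_mono[OF y(2), of 0] unfolding x2 vge_minus_iff by simp
  ultimately have "enorm eps (emul eps (econj a) d) \<in> units_OF v"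
    unfolding x by (simp add: norm_unit_if_not_vge_1)
  moreover have "vge 0 (enorm eps a)" "vge 0 (enorm eps d)"
    using g by (simp_all add: Kgrp_iff OE_iff_vge_enorm)
  ultimately show ?thesis
    using units_OF_mult_iff by (simp add: enorm_emul)
qed

lemma dcoset_mone_if_lower_left_ezero:
  "g \<in> Kgrp v eps \<Longrightarrow> lower_left g = ezero \<Longrightarrow> g \<in> dcoset v eps mone"
  by (rule mem_dcoset_if_lower_left[OF mone_Kgrp mone_Bgrp]) simp_all

lemma dcoset_wmat_if_lower_left_unit:
  assumes g: "M2 a b c d \<in> Kgrp v eps" and c: "enorm eps c \<in> units_OF v"
  shows "M2 a b c d \<in> dcoset v eps wmat"
proof -
  obtain t where t: "emul eps (econj a) c = (0, t)"
    using Kgrp_trace_zero[OF g] .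
  have "(0, t) \<in> OE v eps"
    using g unfolding t[symmetric] by (simp add: Kgrp_iff OE_emul OE_econj)
  then have "vge 0 (t / enorm eps c)"
    using c by (simp add: OE_pair_iff vge_divide_unit)
  txt \<open>\<open>(0, t / N(c))\<close> is \<open>- a / c\<close>, so the upper unipotent element it defines clears \<open>a\<close>.\<close>
  have "emul eps a (econj c) = (0, - t)"
    using arg_cong[OF t, of econj] by (simp add: econj_emul emul_commute)
  then have "emul eps (eadd a (emul eps (0, t / enorm eps c) c)) (econj c) = ezero"
    using c by (simp add: emul_eadd_distrib_right emul_assoc emul_econj_self ezero_def units_OF_def)
  moreover have "c \<noteq> ezero"
    using c by (auto simp: units_OF_def)
  then have "econj c \<noteq> ezero"
    by (metis econj_econj econj_ezero)
  ultimately have "eadd a (emul eps (0, t / enorm eps c) c) = ezero"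
    by (simp add: emul_eq_ezero_iff[OF eps_nonsquare])
  then show ?thesis
    using mem_dcoset_if_lower_left[OF wmat_Kgrp upper_unipotent_Bgrp[OF \<open>vge 0 (t / enorm eps c)\<close>] g]
    by (simp add: wmat_def upper_unipotent_def)
qed

lemma Kgrp_lower_left_multiple:
  assumes g: "M2 a b c d \<in> Kgrp v eps" and a: "enorm eps a \<in> units_OF v"
  obtains \<tau> where "c = emul eps (0, \<tau>) a"
proof -
  obtain t where t: "emul eps (econj a) c = (0, t)"
    using Kgrp_trace_zero[OF g] .
  have "c = emul eps (inverse (enorm eps a), 0) (emul eps (emul eps a (econj a)) c)"
    using a by (cases c) (simp add: emul_econj_self units_OF_def)
  also have "\<dots> = emul eps (inverse (enorm eps a), 0) (emul eps a (0, t))"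
    by (simp only: emul_assoc t)
  also have "\<dots> = emul eps (0, t / enorm eps a) a"
    by (cases a) (simp add: field_simps)
  finally show ?thesis
    by (rule that)
qed

lemma dcoset_lower_unipotent_if:
  assumes g: "M2 a b c d \<in> Kgrp v eps" and c: "c = emul eps (0, \<tau>) a"
    and \<tau>: "\<tau> \<noteq> 0" and \<rho>: "\<rho> \<noteq> 0" "v \<rho> = v \<tau>" "0 \<le> v \<rho>"
  shows "M2 a b c d \<in> dcoset v eps (lower_unipotent \<rho>)"
proof -
  have "\<tau> / \<rho> \<in> units_OF v"
    using \<tau> \<rho> by (simp add: units_OF_def val_divide)
  moreover obtain x y where xy: "x * x - eps * y * y = \<tau> / \<rho>"
    using unit_is_norm[OF calculation] by blast
  ultimately have "diag_unit eps (x, y) \<in> Bgrp v eps"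
    by (intro diag_unit_Bgrp) (simp_all add: OE_iff_vge_enorm units_OF_iff_vge)
  moreover have "lower_left (mmul eps (uinv (lower_unipotent \<rho>))
      (mmul eps (diag_unit eps (x, y)) (M2 a b c d))) = ezero"
  proof -
    txt \<open>\<open>diag(\<alpha>, \<alpha>/N(\<alpha>))\<close> with \<open>N(\<alpha>) = \<tau>/\<rho>\<close> turns \<open>c = \<tau>\<surd>\<epsilon> a\<close> into \<open>\<rho>\<surd>\<epsilon> \<alpha> a\<close>.\<close>
    have "lower_left (mmul eps (uinv (lower_unipotent \<rho>)) (mmul eps (diag_unit eps (x, y)) (M2 a b c d)))
      = eadd (emul eps (0, - \<rho>) (emul eps (x, y) a))
          (emul eps (emul eps (inverse (\<tau> / \<rho>), 0) (x, y)) (emul eps (0, \<tau>) a))"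
      by (simp add: uinv_lower_unipotent lower_unipotent_def diag_unit_def xy c)
    also have "\<dots> = ezero"
      using \<tau> \<rho>(1) by (cases a) (simp add: ezero_def field_simps)
    finally show ?thesis .
  qed
  ultimately show ?thesis
    using \<rho>(3) by (intro mem_dcoset_if_lower_left[OF lower_unipotent_Kgrp _ g]) (simp_all add: vge_def)
qed

end

locale unitary_double_cosets = unramified_quadratic +
  fixes pi :: 'a
  assumes pi_nonzero: "pi \<noteq> 0" and val_pi: "v pi = 1"
begin

lemma val_pi_power: "v (pi ^ k) = int k"
  using pi_nonzero by (simp add: val_power val_pi)

lemma reps_eq: "reps pi = {mone, wmat} \<union> {lower_unipotent (pi ^ k) | k. 1 \<le> k}"
  by (simp add: reps_def lower_unipotent_def)

lemma reps_Kgrp: "reps pi \<subseteq> Kgrp v eps"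
  using mone_Kgrp wmat_Kgrp lower_unipotent_Kgrp by (auto simp: reps_eq vge_def val_pi_power)

lemma reps_eq_if_lower_left_order_eq:
  "r \<in> reps pi \<Longrightarrow> r' \<in> reps pi \<Longrightarrow> lower_left_order r = lower_left_order r' \<Longrightarrow> r = r'"
  using pi_nonzero
  by (auto simp: reps_eq lower_left_order_mone lower_left_order_wmat
      lower_left_order_lower_unipotent val_pi_power)

lemma dcoset_lower_unipotent_if_lower_left_vge_1:
  assumes g: "M2 a b c d \<in> Kgrp v eps" and c: "c \<noteq> ezero" "vge 1 (enorm eps c)"
  obtains k where "1 \<le> k" "M2 a b c d \<in> dcoset v eps (lower_unipotent (pi ^ k))"
proof -
  have a: "enorm eps a \<in> units_OF v"
    using Kgrp_upper_left_unit[OF g c(2)] .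
  obtain \<tau> where c_eq: "c = emul eps (0, \<tau>) a"
    using Kgrp_lower_left_multiple[OF g a] .
  have \<tau>: "\<tau> \<noteq> 0"
    using c(1) c_eq by (cases a) (auto simp: ezero_def)
  have "enorm eps c = - (eps * \<tau> * \<tau>) * enorm eps a"
    by (simp add: c_eq enorm_emul)
  then have "v (enorm eps c) = 2 * v \<tau>"
    using \<tau> eps_unit a by (simp add: units_OF_def val_mult)
  with c enorm_eps_eq_0_iff[of c] have "1 \<le> v \<tau>"
    by (auto simp: vge_def)
  moreover have "M2 a b c d \<in> dcoset v eps (lower_unipotent (pi ^ nat (v \<tau>)))"
    using g c_eq \<tau> pi_nonzero \<open>1 \<le> v \<tau>\<close>
    by (intro dcoset_lower_unipotent_if) (simp_all add: val_pi_power)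
  ultimately show ?thesis
    using that[of "nat (v \<tau>)"] by simp
qed

lemma Kgrp_mem_dcoset_reps:
  assumes g: "g \<in> Kgrp v eps"
  shows "\<exists>r \<in> reps pi. g \<in> dcoset v eps r"
proof -
  obtain a b c d where g_eq: "g = M2 a b c d"
    by (cases g)
  have "vge 0 (enorm eps c)"
    using g by (simp add: g_eq Kgrp_iff OE_iff_vge_enorm)
  then consider "c = ezero" | "enorm eps c \<in> units_OF v" | "c \<noteq> ezero" "vge 1 (enorm eps c)"
    by (auto simp: units_OF_iff_vge)
  then show ?thesis
  proof cases
    case 1
    then show ?thesis
      using dcoset_mone_if_lower_left_ezero[OF g] by (simp add: g_eq reps_def)
  next
    case 2
    then show ?thesis
      using dcoset_wmat_if_lower_left_unit g by (simp add: g_eq reps_def)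
  next
    case 3
    then obtain k where "1 \<le> k" "g \<in> dcoset v eps (lower_unipotent (pi ^ k))"
      using dcoset_lower_unipotent_if_lower_left_vge_1 g by (metis g_eq)
    then show ?thesis
      by (auto simp: reps_eq)
  qed
qed

end

theorem proposition2p2:
  fixes v :: "'a::field \<Rightarrow> int" and eps pi :: 'a
  assumes "nonarch_local_field v"
    and "odd_residual_char v"
    and "eps \<in> units_OF v"
    and "\<not> (\<exists>x. x * x = eps)"
    and "pi \<noteq> 0" and "v pi = 1"
  shows "reps pi \<subseteq> Kgrp v eps \<and>
         (\<forall>g \<in> Kgrp v eps. \<exists>!r. r \<in> reps pi \<and> g \<in> dcoset v eps r)"
proof -
  interpret unitary_double_cosets v eps pi
    using assms by unfold_locales
  have "\<exists>!r. r \<in> reps pi \<and> g \<in> dcoset v eps r" if "g \<in> Kgrp v eps" for g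
  proof (rule ex_ex1I)
    show "\<exists>r. r \<in> reps pi \<and> g \<in> dcoset v eps r"
      using Kgrp_mem_dcoset_reps[OF that] by blast
  next
    fix r r' assume "r \<in> reps pi \<and> g \<in> dcoset v eps r" "r' \<in> reps pi \<and> g \<in> dcoset v eps r'"
    then show "r = r'"
      using reps_eq_if_lower_left_order_eq lower_left_order_dcoset by metis
  qed
  with reps_Kgrp show ?thesis
    by blast
qed

end
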